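(* Let $\mathcal X$ and $\mathcal U$ be finite nonempty sets, $f:\mathcal X\times\mathcal U\to\mathcal X$, and $\ell_1,\ell_2:\mathcal X\to\mathbb R$. Define, for $x\in\mathcal X$, $V_{\mathrm{R}i}^*(x)=\max_{\pi\in\Pi}\max_{\tau\in\mathbb N}\ell_i(\xi_x^\pi(\tau))$ for $i=1,2$, $$\hat\ell(x)=\max\big\{\min\{\ell_1(x),V_{\mathrm{R}2}^*(x)\},\ \min\{V_{\mathrm{R}1}^*(x),\ell_2(x)\}\big\},\qquad \tilde V_{\mathrm R}^*(x)=\max_{\pi\in\Pi}\max_{\tau\in\mathbb N}\hat\ell(\xi_x^\pi(\tau)).$$ Then for every $x\in\mathcal X$, $$\max_{\bar\pi\in\overline\Pi}\min\Big\{\max_{\tau\in\mathbb N}\ell_1(\bar\xi_x^{\bar\pi}(\tau)),\max_{\tau\in\mathbb N}\ell_2(\bar\xi_x^{\bar\pi}(\tau))\Big\}=\max_{\mathbf u\in\mathbb U}\min\Big\{\max_{\tau\in\mathbb N}\ell_1(\xi_x^{\mathbf u}(\tau)),\max_{\tau\in\mathbb N}\ell_2(\xi_x^{\mathbf u}(\tau))\Big\}=\tilde V_{\mathrm R}^*(x).$$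
   Context: $\mathbb N=\{0,1,2,\dots\}$. $\Pi$ is the set of maps $\pi:\mathcal X\to\mathcal U$ and $\mathbb U$ the set of action sequences $\mathbf u:\mathbb N\to\mathcal U$. For $x\in\mathcal X$ and $\pi\in\Pi$, $\xi_x^\pi(0)=x$, $\xi_x^\pi(t+1)=f(\xi_x^\pi(t),\pi(\xi_x^\pi(t)))$; for $\mathbf u\in\mathbb U$, $\xi_x^{\mathbf u}(0)=x$, $\xi_x^{\mathbf u}(t+1)=f(\xi_x^{\mathbf u}(t),\mathbf u(t))$. Let $\mathcal Y=\{\ell_1(x):x\in\mathcal X\}$, $\mathcal Z=\{\ell_2(x):x\in\mathcal X\}$, and $\overline\Pi$ the set of augmented policies $\bar\pi:\mathcal X\times\mathcal Y\times\mathcal Z\to\mathcal U$. The augmented trajectory is defined by $\bar\xi_x^{\bar\pi}(0)=x$, $\bar y_x^{\bar\pi}(0)=\ell_1(x)$, $\bar z_x^{\bar\pi}(0)=\ell_2(x)$, $\bar\xi_x^{\bar\pi}(t+1)=f\big(\bar\xi_x^{\bar\pi}(t),\bar\pi(\bar\xi_x^{\bar\pi}(t),\bar y_x^{\bar\pi}(t),\bar z_x^{\bar\pi}(t))\big)$, $\bar y_x^{\bar\pi}(t+1)=\max\{\ell_1(\bar\xi_x^{\bar\pi}(t+1)),\bar y_x^{\bar\pi}(t)\}$, $\bar z_x^{\bar\pi}(t+1)=\max\{\ell_2(\bar\xi_x^{\bar\pi}(t+1)),\bar z_x^{\bar\pi}(t)\}$. *)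

theory Defs
  imports Complex_Main
begin

fun traj_pol :: "('x \<Rightarrow> 'u \<Rightarrow> 'x) \<Rightarrow> ('x \<Rightarrow> 'u) \<Rightarrow> 'x \<Rightarrow> nat \<Rightarrow> 'x" where
  "traj_pol f pol x 0 = x"
| "traj_pol f pol x (Suc t) = f (traj_pol f pol x t) (pol (traj_pol f pol x t))"

fun traj_seq :: "('x \<Rightarrow> 'u \<Rightarrow> 'x) \<Rightarrow> (nat \<Rightarrow> 'u) \<Rightarrow> 'x \<Rightarrow> nat \<Rightarrow> 'x" where
  "traj_seq f u x 0 = x"
| "traj_seq f u x (Suc t) = f (traj_seq f u x t) (u t)"

text \<open>Augmented trajectory (state, running max of l1, running max of l2)
  under an augmented policy p : X x Y x Z -> U.\<close>
fun aug_traj :: "('x \<Rightarrow> 'u \<Rightarrow> 'x) \<Rightarrow> ('x \<Rightarrow> real) \<Rightarrow> ('x \<Rightarrow> real)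
    \<Rightarrow> ('x \<Rightarrow> real \<Rightarrow> real \<Rightarrow> 'u) \<Rightarrow> 'x \<Rightarrow> nat \<Rightarrow> 'x \<times> real \<times> real" where
  "aug_traj f l1 l2 p x 0 = (x, l1 x, l2 x)"
| "aug_traj f l1 l2 p x (Suc t) =
     (case aug_traj f l1 l2 p x t of (s, y, z) \<Rightarrow>
        (let s' = f s (p s y z) in (s', max (l1 s') y, max (l2 s') z)))"

definition VR :: "('x \<Rightarrow> 'u \<Rightarrow> 'x) \<Rightarrow> ('x \<Rightarrow> real) \<Rightarrow> 'x \<Rightarrow> real" where
  "VR f l x = Max {Max (range (\<lambda>t. l (traj_pol f pol x t))) | pol. True}"

definition lhat :: "('x \<Rightarrow> 'u \<Rightarrow> 'x) \<Rightarrow> ('x \<Rightarrow> real) \<Rightarrow> ('x \<Rightarrow> real) \<Rightarrow> 'x \<Rightarrow> real" where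
  "lhat f l1 l2 x = max (min (l1 x) (VR f l2 x)) (min (VR f l1 x) (l2 x))"

definition VRtilde :: "('x \<Rightarrow> 'u \<Rightarrow> 'x) \<Rightarrow> ('x \<Rightarrow> real) \<Rightarrow> ('x \<Rightarrow> real) \<Rightarrow> 'x \<Rightarrow> real" where
  "VRtilde f l1 l2 x = VR f (lhat f l1 l2) x"

end

theory Submission
  imports Defs
begin

(*
  A strategy that reaches l1 >= v at time a and l2 >= v at time b with, say, a <= b passes at
  time a through a state s with l1 s >= v and V_R2 s >= v, so lhat s >= v; hence no open-loop
  action sequence does better than the maximum of lhat over the reachable states, which is
  VRtilde.  Conversely, an augmented policy attains that value: it follows a memoryless policy
  towards a maximiser of lhat and, as soon as the running maximum in its augmented state shows
  that the first target has been met, switches to a memoryless policy reaching the second one.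
  Memoryless policies suffice for plain reachability on a finite state space (attractor
  construction), which also identifies V_R l x with the maximum of l over the states reachable
  from x.
*)

lemma traj_seq_add: "traj_seq f u x (a + n) = traj_seq f (\<lambda>t. u (a + t)) (traj_seq f u x a) n"
  by (induction n) auto

lemma traj_pol_add: "traj_pol f pol x (a + n) = traj_pol f pol (traj_pol f pol x a) n"
  by (induction n) auto

lemma traj_seq_cong: "(\<And>i. i < n \<Longrightarrow> u i = v i) \<Longrightarrow> traj_seq f u x n = traj_seq f v x n"
  by (induction n) auto

lemma traj_pol_eq_traj_seq: "traj_pol f pol x n = traj_seq f (\<lambda>t. pol (traj_pol f pol x t)) x n"
  by (induction n) auto

lemma traj_seq_eq_traj_pol:
  "(\<And>i. i < n \<Longrightarrow> u i = pol (traj_seq f u x i)) \<Longrightarrow> traj_seq f u x n = traj_pol f pol x n"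
  by (induction n) auto

definition reachable :: "('x \<Rightarrow> 'u \<Rightarrow> 'x) \<Rightarrow> 'x \<Rightarrow> 'x set" where
  "reachable f x = {y. \<exists>u n. traj_seq f u x n = y}"

lemma traj_seq_reachable: "traj_seq f u x n \<in> reachable f x"
  unfolding reachable_def by blast

lemma reachable_refl: "x \<in> reachable f x"
  using traj_seq_reachable[of f _ x 0] by simp

lemma traj_pol_reachable: "traj_pol f pol x n \<in> reachable f x"
  by (subst traj_pol_eq_traj_seq) (rule traj_seq_reachable)

lemma traj_seq_reachable_later:
  "a \<le> b \<Longrightarrow> traj_seq f u x b \<in> reachable f (traj_seq f u x a)"
  using traj_seq_add[of f u x a "b - a"] traj_seq_reachable by fastforce

lemma reachable_trans:
  assumes "y \<in> reachable f x" and "z \<in> reachable f y"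
  shows "z \<in> reachable f x"
proof -
  obtain u n where u: "traj_seq f u x n = y" using assms(1) unfolding reachable_def by blast
  obtain v m where v: "traj_seq f v y m = z" using assms(2) unfolding reachable_def by blast
  define w where "w t = (if t < n then u t else v (t - n))" for t
  have "traj_seq f w x n = y" using u traj_seq_cong[of n w u f x] by (simp add: w_def)
  moreover have "(\<lambda>t. w (n + t)) = v" by (simp add: w_def)
  ultimately have "traj_seq f w x (n + m) = z" using v by (simp add: traj_seq_add)
  then show ?thesis using traj_seq_reachable by metis
qed

lemma memoryless_policy_reaching:
  "\<exists>pol. \<forall>s. reachable f s \<inter> T \<noteq> {} \<longrightarrow> (\<exists>t. traj_pol f pol s t \<in> T)"
proof -
  define dist where "dist s = (LEAST n. \<exists>u. traj_seq f u s n \<in> T)" for s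
  define pol where "pol s = (SOME a. \<exists>u. traj_seq f u (f s a) (dist s - 1) \<in> T)" for s
  have "\<exists>t. traj_pol f pol s t \<in> T" if "traj_seq f u s n \<in> T" for n s u
    using that
  proof (induction n arbitrary: s u rule: less_induct)
    case (less n)
    have hit: "\<exists>u. traj_seq f u s (dist s) \<in> T"
      unfolding dist_def by (rule LeastI_ex) (use less.prems in blast)
    have "dist s \<le> n"
      unfolding dist_def by (rule Least_le) (use less.prems in blast)
    show ?case
    proof (cases "dist s")
      case 0
      then have "traj_pol f pol s 0 \<in> T" using hit by simp
      then show ?thesis ..
    next
      case (Suc j)
      from hit obtain v where "traj_seq f v s (1 + j) \<in> T" using Suc by auto
      then have "traj_seq f (\<lambda>t. v (1 + t)) (f s (v 0)) j \<in> T"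
        by (simp only: traj_seq_add) simp
      then have "\<exists>a v. traj_seq f v (f s a) j \<in> T" by blast
      then have "\<exists>v. traj_seq f v (f s (pol s)) j \<in> T"
        unfolding pol_def Suc diff_Suc_1 by (rule someI_ex)
      moreover have "j < n" using \<open>dist s \<le> n\<close> Suc by simp
      ultimately obtain t where "traj_pol f pol (f s (pol s)) t \<in> T"
        using less.IH by blast
      then have "traj_pol f pol s (1 + t) \<in> T" by (simp only: traj_pol_add) simp
      then show ?thesis ..
    qed
  qed
  then show ?thesis unfolding reachable_def by blast
qed

lemma reachable_by_policy: "y \<in> reachable f x \<Longrightarrow> \<exists>pol t. traj_pol f pol x t = y"
  using memoryless_policy_reaching[of f "{y}"] by blast

lemma finite_range_comp_finite: "finite (range (\<lambda>t. l (\<xi> t :: 'x::finite)))"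
  using finite_range_imageI[of \<xi> l] by simp

lemma VR_eq_Max_reachable:
  fixes f :: "'x::finite \<Rightarrow> 'u \<Rightarrow> 'x"
  shows "VR f l x = Max (l ` reachable f x)"
proof -
  let ?M = "Max (l ` reachable f x)"
  let ?val = "\<lambda>pol. Max (range (\<lambda>t. l (traj_pol f pol x t)))"
  have val_in: "?val pol \<in> l ` reachable f x" for pol
  proof -
    have "?val pol \<in> range (\<lambda>t. l (traj_pol f pol x t))"
      by (rule Max_in[OF finite_range_comp_finite]) simp
    then obtain t where "?val pol = l (traj_pol f pol x t)" by blast
    then show ?thesis using traj_pol_reachable by (rule image_eqI)
  qed
  have "?M \<in> l ` reachable f x"
    by (rule Max_in) (use reachable_refl[of x f] in auto)
  then obtain y where y: "y \<in> reachable f x" "l y = ?M" by auto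
  obtain pol t where "traj_pol f pol x t = y" using reachable_by_policy[OF y(1)] by blast
  then have "?M \<le> ?val pol"
    using y(2) Max_ge[OF finite_range_comp_finite[of l "traj_pol f pol x"]] by (metis rangeI)
  moreover have val_le: "?val pol \<le> ?M" for pol using val_in[of pol] by simp
  ultimately have "?M \<in> {?val pol | pol. True}" by (metis (mono_tags, lifting) antisym mem_Collect_eq)
  moreover have "finite {?val pol | pol. True}"
    by (rule finite_subset[of _ "l ` reachable f x"]) (use val_in in auto)
  ultimately show ?thesis
    unfolding VR_def using val_le by (intro Max_eqI) auto
qed

lemma VR_attained:
  fixes f :: "'x::finite \<Rightarrow> 'u \<Rightarrow> 'x"
  obtains y where "y \<in> reachable f x" and "VR f l x = l y"
proof -
  have "Max (l ` reachable f x) \<in> l ` reachable f x"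
    by (rule Max_in) (use reachable_refl[of x f] in auto)
  then show ?thesis using that by (auto simp: VR_eq_Max_reachable)
qed

lemma le_VR:
  fixes f :: "'x::finite \<Rightarrow> 'u \<Rightarrow> 'x"
  shows "y \<in> reachable f x \<Longrightarrow> l y \<le> VR f l x"
  by (simp add: VR_eq_Max_reachable)

lemma lhat_commute: "lhat f l1 l2 = lhat f l2 l1"
  unfolding lhat_def by (simp add: max.commute min.commute)

lemma min_le_lhat:
  fixes f :: "'x::finite \<Rightarrow> 'u \<Rightarrow> 'x"
  assumes "y \<in> reachable f s"
  shows "min (l1 s) (l2 y) \<le> lhat f l1 l2 s"
  using le_VR[OF assms, of l2] unfolding lhat_def by linarith

lemma lhat_le_VRtilde:
  fixes f :: "'x::finite \<Rightarrow> 'u \<Rightarrow> 'x"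
  shows "y \<in> reachable f x \<Longrightarrow> lhat f l1 l2 y \<le> VRtilde f l1 l2 x"
  unfolding VRtilde_def by (rule le_VR)

definition reach_both_value :: "('x \<Rightarrow> 'a::linorder) \<Rightarrow> ('x \<Rightarrow> 'a) \<Rightarrow> (nat \<Rightarrow> 'x) \<Rightarrow> 'a" where
  "reach_both_value l1 l2 \<xi> = min (Max (range (\<lambda>t. l1 (\<xi> t)))) (Max (range (\<lambda>t. l2 (\<xi> t))))"

lemma reach_both_value_commute: "reach_both_value l1 l2 \<xi> = reach_both_value l2 l1 \<xi>"
  unfolding reach_both_value_def by (rule min.commute)

lemma reach_both_value_attained:
  fixes \<xi> :: "nat \<Rightarrow> 'x::finite"
  obtains a b where "reach_both_value l1 l2 \<xi> = min (l1 (\<xi> a)) (l2 (\<xi> b))"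
proof -
  have "Max (range (\<lambda>t. l (\<xi> t))) \<in> range (\<lambda>t. l (\<xi> t))" for l :: "'x \<Rightarrow> 'a"
    by (rule Max_in[OF finite_range_comp_finite]) simp
  then obtain a b where "Max (range (\<lambda>t. l1 (\<xi> t))) = l1 (\<xi> a)"
    and "Max (range (\<lambda>t. l2 (\<xi> t))) = l2 (\<xi> b)" by blast
  then show ?thesis by (intro that[of a b]) (simp add: reach_both_value_def)
qed

lemma le_reach_both_value_iff:
  fixes \<xi> :: "nat \<Rightarrow> 'x::finite"
  shows "v \<le> reach_both_value l1 l2 \<xi> \<longleftrightarrow> (\<exists>t. v \<le> l1 (\<xi> t)) \<and> (\<exists>t. v \<le> l2 (\<xi> t))"
  unfolding reach_both_value_def by (simp add: finite_range_comp_finite Max_ge_iff)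

lemma reach_both_value_le_VRtilde:
  fixes f :: "'x::finite \<Rightarrow> 'u \<Rightarrow> 'x"
  shows "reach_both_value l1 l2 (traj_seq f u x) \<le> VRtilde f l1 l2 x"
proof -
  let ?\<xi> = "traj_seq f u x"
  obtain a b where val: "reach_both_value l1 l2 ?\<xi> = min (l1 (?\<xi> a)) (l2 (?\<xi> b))"
    by (rule reach_both_value_attained)
  show ?thesis
  proof (cases "a \<le> b")
    case True
    then have "min (l1 (?\<xi> a)) (l2 (?\<xi> b)) \<le> lhat f l1 l2 (?\<xi> a)"
      by (intro min_le_lhat traj_seq_reachable_later)
    also have "\<dots> \<le> VRtilde f l1 l2 x" by (intro lhat_le_VRtilde traj_seq_reachable)
    finally show ?thesis by (simp only: val)
  next
    case False
    then have "min (l2 (?\<xi> b)) (l1 (?\<xi> a)) \<le> lhat f l2 l1 (?\<xi> b)"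
      by (intro min_le_lhat traj_seq_reachable_later) simp
    also have "\<dots> \<le> VRtilde f l1 l2 x"
      unfolding lhat_commute[of f l2] by (intro lhat_le_VRtilde traj_seq_reachable)
    finally show ?thesis by (simp only: val min.commute)
  qed
qed

definition aug_actions :: "('x \<Rightarrow> 'u \<Rightarrow> 'x) \<Rightarrow> ('x \<Rightarrow> real) \<Rightarrow> ('x \<Rightarrow> real)
    \<Rightarrow> ('x \<Rightarrow> real \<Rightarrow> real \<Rightarrow> 'u) \<Rightarrow> 'x \<Rightarrow> nat \<Rightarrow> 'u" where
  "aug_actions f l1 l2 p x t = (case aug_traj f l1 l2 p x t of (s, y, z) \<Rightarrow> p s y z)"

lemma fst_aug_traj_eq_traj_seq:
  "fst (aug_traj f l1 l2 p x t) = traj_seq f (aug_actions f l1 l2 p x) x t"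
  by (induction t) (auto simp: aug_actions_def Let_def split: prod.split)

lemma aug_traj_running_max:
  "fst (snd (aug_traj f l1 l2 p x t)) = Max ((\<lambda>i. l1 (fst (aug_traj f l1 l2 p x i))) ` {..t})"
proof (induction t)
  case (Suc t)
  have "{..Suc t} = insert (Suc t) {..t}" by auto
  with Suc show ?case by (auto simp: Let_def max.commute split: prod.split)
qed simp

lemma aug_traj_swap:
  "aug_traj f l1 l2 (\<lambda>s y z. p s z y) x t = (case aug_traj f l2 l1 p x t of (s, z, y) \<Rightarrow> (s, y, z))"
  by (induction t) (auto simp: Let_def split: prod.split)

lemma switching_aug_traj:
  fixes f :: "'x \<Rightarrow> 'u \<Rightarrow> 'x" and l1 l2 :: "'x \<Rightarrow> real" and pol1 pol2 :: "'x \<Rightarrow> 'u"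
    and x :: 'x and v :: real
  defines "S \<equiv> \<lambda>t. fst (aug_traj f l1 l2 (\<lambda>s y z. if y < v then pol1 s else pol2 s) x t)"
  assumes "v \<le> l1 (traj_pol f pol1 x t1)"
  obtains t0 where "t0 \<le> t1" and "\<exists>i\<le>t0. v \<le> l1 (S i)" and "S t0 = traj_pol f pol1 x t0"
    and "\<And>j. S (t0 + j) = traj_pol f pol2 (S t0) j"
proof -
  define p where "p s y z = (if y < v then pol1 s else pol2 s)" for s and y z :: real
  define u where "u = aug_actions f l1 l2 p x"
  define Y where "Y t = fst (snd (aug_traj f l1 l2 p x t))" for t
  have S_eq: "S t = traj_seq f u x t" for t
    unfolding S_def u_def p_def by (rule fst_aug_traj_eq_traj_seq)
  have u_eq: "u t = (if Y t < v then pol1 (S t) else pol2 (S t))" for t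
    unfolding u_def Y_def S_def p_def aug_actions_def by (simp split: prod.split)
  have Y_eq: "Y t = Max ((\<lambda>i. l1 (S i)) ` {..t})" for t
    unfolding Y_def S_def p_def by (rule aug_traj_running_max)
  have first_phase: "S t = traj_pol f pol1 x t" if "\<forall>i<t. Y i < v" for t
    unfolding S_eq using that by (intro traj_seq_eq_traj_pol) (simp add: u_eq S_eq)
  have "\<exists>t\<le>t1. v \<le> Y t"
  proof (rule ccontr)
    assume "\<not> (\<exists>t\<le>t1. v \<le> Y t)"
    then have "\<forall>i\<le>t1. Y i < v" by auto
    moreover from this have "S t1 = traj_pol f pol1 x t1" by (intro first_phase) simp
    moreover have "l1 (S t1) \<le> Y t1" unfolding Y_eq by (rule Max_ge) auto
    ultimately have "v \<le> Y t1" using assms(2) by simp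
    with \<open>\<forall>i\<le>t1. Y i < v\<close> show False by auto
  qed
  then obtain t0 where "t0 \<le> t1" and "v \<le> Y t0" and before: "\<forall>i<t0. Y i < v"
    using exists_least_iff[of "\<lambda>t. v \<le> Y t"] by (metis leI le_trans not_less)
  show ?thesis
  proof
    show "t0 \<le> t1" by fact
    show "\<exists>i\<le>t0. v \<le> l1 (S i)" using \<open>v \<le> Y t0\<close> by (auto simp: Y_eq Max_ge_iff)
    show "S t0 = traj_pol f pol1 x t0" using before by (rule first_phase)
    have "Y t0 \<le> Y (t0 + i)" for i unfolding Y_eq by (rule Max_mono) auto
    then have "\<not> Y (t0 + i) < v" for i using \<open>v \<le> Y t0\<close> by (meson not_less order_trans)
    then have u_pol2: "u (t0 + i) = pol2 (S (t0 + i))" for i by (simp add: u_eq)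
    have shift: "S (t0 + i) = traj_seq f (\<lambda>i. u (t0 + i)) (S t0) i" for i
      unfolding S_eq by (rule traj_seq_add)
    show "S (t0 + j) = traj_pol f pol2 (S t0) j" for j
      unfolding shift by (rule traj_seq_eq_traj_pol) (metis shift u_pol2)
  qed
qed

lemma aug_policy_reaching_both:
  fixes f :: "'x::finite \<Rightarrow> 'u \<Rightarrow> 'x" and l1 l2 :: "'x \<Rightarrow> real"
  assumes "y \<in> reachable f x" and "v \<le> l1 y" and "z \<in> reachable f y" and "v \<le> l2 z"
  shows "\<exists>p. v \<le> reach_both_value l1 l2 (\<lambda>t. fst (aug_traj f l1 l2 p x t))"
proof -
  obtain pol1 t1 where pol1: "traj_pol f pol1 x t1 = y"
    using reachable_by_policy[OF assms(1)] by blast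
  obtain pol2 where pol2: "\<And>s. reachable f s \<inter> {w. v \<le> l2 w} \<noteq> {} \<Longrightarrow> \<exists>t. v \<le> l2 (traj_pol f pol2 s t)"
    using memoryless_policy_reaching[of f "{w. v \<le> l2 w}"] by auto
  define S where
    "S t = fst (aug_traj f l1 l2 (\<lambda>s (a::real) (b::real). if a < v then pol1 s else pol2 s) x t)" for t
  obtain t0 where "t0 \<le> t1" and l1_hit: "\<exists>i\<le>t0. v \<le> l1 (S i)"
    and "S t0 = traj_pol f pol1 x t0" and second_phase: "\<And>j. S (t0 + j) = traj_pol f pol2 (S t0) j"
    using switching_aug_traj[of v l1 f pol1 x t1 l2 pol2] pol1 assms(2)
    unfolding S_def by blast
  then have "y = traj_pol f pol1 (S t0) (t1 - t0)"
    using pol1 traj_pol_add[of f pol1 x t0 "t1 - t0"] by simp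
  then have "z \<in> reachable f (S t0)"
    using assms(3) traj_pol_reachable reachable_trans by metis
  then obtain j where "v \<le> l2 (S (t0 + j))"
    using pol2[of "S t0"] assms(4) second_phase by auto
  with l1_hit have "v \<le> reach_both_value l1 l2 S"
    unfolding le_reach_both_value_iff by blast
  then show ?thesis unfolding S_def by blast
qed

lemma exists_aug_policy_ge_VRtilde:
  fixes f :: "'x::finite \<Rightarrow> 'u \<Rightarrow> 'x" and l1 l2 :: "'x \<Rightarrow> real"
  shows "\<exists>p. VRtilde f l1 l2 x \<le> reach_both_value l1 l2 (\<lambda>t. fst (aug_traj f l1 l2 p x t))"
proof -
  let ?W = "VRtilde f l1 l2 x"
  obtain y where y: "y \<in> reachable f x" and W: "?W = lhat f l1 l2 y"
    unfolding VRtilde_def by (rule VR_attained)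
  obtain z1 where z1: "z1 \<in> reachable f y" and "VR f l1 y = l1 z1" by (rule VR_attained)
  obtain z2 where z2: "z2 \<in> reachable f y" and "VR f l2 y = l2 z2" by (rule VR_attained)
  consider "?W \<le> l1 y" "?W \<le> l2 z2" | "?W \<le> l2 y" "?W \<le> l1 z1"
    using W \<open>VR f l1 y = l1 z1\<close> \<open>VR f l2 y = l2 z2\<close> unfolding lhat_def by linarith
  then show ?thesis
  proof cases
    case 1
    then show ?thesis using aug_policy_reaching_both[OF y _ z2] by blast
  next
    case 2
    then obtain p where "?W \<le> reach_both_value l2 l1 (\<lambda>t. fst (aug_traj f l2 l1 p x t))"
      using aug_policy_reaching_both[OF y _ z1] by blast
    moreover have "fst (aug_traj f l1 l2 (\<lambda>s a b. p s b a) x t) = fst (aug_traj f l2 l1 p x t)" for t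
      unfolding aug_traj_swap[of f l1 l2 p x t] by (simp add: case_prod_beta)
    ultimately have "?W \<le> reach_both_value l1 l2 (\<lambda>t. fst (aug_traj f l1 l2 (\<lambda>s a b. p s b a) x t))"
      by (simp only: reach_both_value_commute[of l1])
    then show ?thesis by blast
  qed
qed

theorem theorem2:
  fixes f :: "'x::finite \<Rightarrow> 'u::finite \<Rightarrow> 'x"
    and l1 l2 :: "'x \<Rightarrow> real"
    and x :: 'x
  shows "Max {min (Max (range (\<lambda>t. l1 (fst (aug_traj f l1 l2 p x t)))))
                  (Max (range (\<lambda>t. l2 (fst (aug_traj f l1 l2 p x t))))) | p. True}
         = Max {min (Max (range (\<lambda>t. l1 (traj_seq f u x t))))
                    (Max (range (\<lambda>t. l2 (traj_seq f u x t)))) | u. True}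
       \<and> Max {min (Max (range (\<lambda>t. l1 (traj_seq f u x t))))
                    (Max (range (\<lambda>t. l2 (traj_seq f u x t)))) | u. True}
         = VRtilde f l1 l2 x"
proof -
  let ?W = "VRtilde f l1 l2 x"
  let ?aug_values = "{reach_both_value l1 l2 (\<lambda>t. fst (aug_traj f l1 l2 p x t)) | p. True}"
  let ?seq_values = "{reach_both_value l1 l2 (traj_seq f u x) | u. True}"
  have sub: "?aug_values \<subseteq> ?seq_values" by (auto simp: fst_aug_traj_eq_traj_seq)
  have fin: "finite ?seq_values"
  proof (rule finite_subset)
    have "reach_both_value l1 l2 (traj_seq f u x) \<in> range l1 \<union> range l2" for u
      by (rule reach_both_value_attained[of l1 l2 "traj_seq f u x"]) (simp add: min_def)
    then show "?seq_values \<subseteq> range l1 \<union> range l2" by blast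
  qed simp
  have le: "w \<le> ?W" if "w \<in> ?seq_values" for w using that reach_both_value_le_VRtilde by blast
  obtain p where "?W \<le> reach_both_value l1 l2 (\<lambda>t. fst (aug_traj f l1 l2 p x t))"
    using exists_aug_policy_ge_VRtilde by blast
  with sub le have attained: "?W \<in> ?aug_values" by (blast intro: antisym)
  have "Max ?seq_values = ?W" using fin le attained sub by (intro Max_eqI) auto
  moreover have "Max ?aug_values = ?W"
    using finite_subset[OF sub fin] le attained sub by (intro Max_eqI) auto
  ultimately have "Max ?aug_values = Max ?seq_values \<and> Max ?seq_values = ?W" by simp
  then show ?thesis unfolding reach_both_value_def .
qed

end
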